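(* Let $X$ be a locally solid $f$-algebra with a multiplicative unit $e$. If either $Orth_b(X)$ (with the topology of uniform convergence on bounded sets) or $Orth_c(X)$ (with the topology of equicontinuous convergence) possesses the Lebesgue property, then $X$ possesses the Lebesgue property.
   Context: All vector lattices are Archimedean. An $f$-algebra is a Riesz algebra such that $x\wedge y=0$ implies $zx\wedge y=xz\wedge y=0$ for every $z\ge0$; a locally solid $f$-algebra is an $f$-algebra with a linear topology having a base of solid zero neighborhoods. An orthomorphism is an order bounded linear operator $T$ with $T(x)\perp y$ whenever $x\perp y$ ($x\perp y$ means $|x|\wedge|y|=0$). $Orth_b(X)$: orthomorphisms mapping bounded sets to bounded sets, with $S_\alpha\to0$ iff for every bounded $B$ and zero neighborhood $V$ there is $\alpha_0$ with $S_\alpha(B)\subseteq V$ for $\alpha\ge\alpha_0$. $Orth_c(X)$: continuous orthomorphisms, with $S_\alpha\to0$ iff for every zero neighborhood $V$ there is a zero neighborhood $U$ such that for every $\varepsilon>0$ there is $\alpha_0$ with $S_\alpha(U)\subseteq\varepsilon V$ for $\alpha\ge\alpha_0$. A locally solid vector lattice $(E,\tau)$ has the Lebesgue property if for every net $(u_\alpha)$ in $E$, $u_\alpha\downarrow 0$ implies $u_\alpha\to0$ in $\tau$. *)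

theory Defs
  imports "HOL-Analysis.Analysis"
begin

text \<open>Vector lattices are modelled as types of class ordered_real_vector + lattice
(a Riesz space); the Archimedean property is an explicit assumption.\<close>

definition labs :: "'a::{ordered_real_vector,lattice} \<Rightarrow> 'a" where
  "labs x = sup x (- x)"

definition disj :: "'a::{ordered_real_vector,lattice} \<Rightarrow> 'a \<Rightarrow> bool" where
  "disj x y \<longleftrightarrow> inf (labs x) (labs y) = 0"

definition archimedean_vl :: "'a::{ordered_real_vector,lattice} set \<Rightarrow> bool" where
  "archimedean_vl X \<longleftrightarrow>
     (\<forall>x\<in>X. \<forall>y\<in>X. 0 \<le> x \<and> (\<forall>n::nat. real n *\<^sub>R x \<le> y) \<longrightarrow> x = 0)"

definition riesz_algebra :: "('a::{ordered_real_vector,lattice} \<Rightarrow> 'a \<Rightarrow> 'a) \<Rightarrow> bool" where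
  "riesz_algebra m \<longleftrightarrow> bilinear m \<and> (\<forall>x y z. m (m x y) z = m x (m y z))
     \<and> (\<forall>x y. 0 \<le> x \<longrightarrow> 0 \<le> y \<longrightarrow> 0 \<le> m x y)"

definition f_algebra :: "('a::{ordered_real_vector,lattice} \<Rightarrow> 'a \<Rightarrow> 'a) \<Rightarrow> bool" where
  "f_algebra m \<longleftrightarrow> riesz_algebra m \<and>
     (\<forall>x y z. inf x y = 0 \<and> 0 \<le> z \<longrightarrow> inf (m z x) y = 0 \<and> inf (m x z) y = 0)"

definition mult_unit :: "('a \<Rightarrow> 'a \<Rightarrow> 'a) \<Rightarrow> 'a \<Rightarrow> bool" where
  "mult_unit m e \<longleftrightarrow> (\<forall>x. m e x = x \<and> m x e = x)"

definition linear_topology :: "'a::real_vector topology \<Rightarrow> bool" where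
  "linear_topology T \<longleftrightarrow> topspace T = UNIV
     \<and> continuous_map (prod_topology T T) T (\<lambda>(x, y). x + y)
     \<and> continuous_map (prod_topology euclideanreal T) T (\<lambda>(c, x). c *\<^sub>R x)"

definition zero_nbhd :: "'a::real_vector topology \<Rightarrow> 'a set \<Rightarrow> bool" where
  "zero_nbhd T V \<longleftrightarrow> (\<exists>W. openin T W \<and> 0 \<in> W \<and> W \<subseteq> V)"

definition solid :: "'a::{ordered_real_vector,lattice} set \<Rightarrow> bool" where
  "solid V \<longleftrightarrow> (\<forall>x y. x \<in> V \<longrightarrow> labs y \<le> labs x \<longrightarrow> y \<in> V)"

definition locally_solid :: "'a::{ordered_real_vector,lattice} topology \<Rightarrow> bool" where
  "locally_solid T \<longleftrightarrow> linear_topology T \<and>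
     (\<forall>V. zero_nbhd T V \<longrightarrow> (\<exists>W. zero_nbhd T W \<and> solid W \<and> W \<subseteq> V))"

definition tv_bounded :: "'a::real_vector topology \<Rightarrow> 'a set \<Rightarrow> bool" where
  "tv_bounded T B \<longleftrightarrow>
     (\<forall>V. zero_nbhd T V \<longrightarrow> (\<exists>s>0. \<forall>t. t > s \<longrightarrow> B \<subseteq> (\<lambda>x. t *\<^sub>R x) ` V))"

definition order_bounded_op :: "('a::{ordered_real_vector,lattice} \<Rightarrow> 'a) \<Rightarrow> bool" where
  "order_bounded_op S \<longleftrightarrow> (\<forall>a b. \<exists>c d. S ` {a..b} \<subseteq> {c..d})"

definition orthomorphism :: "('a::{ordered_real_vector,lattice} \<Rightarrow> 'a) \<Rightarrow> bool" where
  "orthomorphism S \<longleftrightarrow> linear S \<and> order_bounded_op S \<and> (\<forall>x y. disj x y \<longrightarrow> disj (S x) y)"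

definition Orth_b :: "'a::{ordered_real_vector,lattice} topology \<Rightarrow> ('a \<Rightarrow> 'a) set" where
  "Orth_b T = {S. orthomorphism S \<and> (\<forall>B. tv_bounded T B \<longrightarrow> tv_bounded T (S ` B))}"

definition Orth_c :: "'a::{ordered_real_vector,lattice} topology \<Rightarrow> ('a \<Rightarrow> 'a) set" where
  "Orth_c T = {S. orthomorphism S \<and> continuous_map T T S}"

definition op_le :: "('a::{ordered_real_vector,lattice} \<Rightarrow> 'a) \<Rightarrow> ('a \<Rightarrow> 'a) \<Rightarrow> bool" where
  "op_le S R \<longleftrightarrow> (\<forall>x. 0 \<le> x \<longrightarrow> S x \<le> R x)"

definition directed_index :: "'j set \<Rightarrow> ('j \<Rightarrow> 'j \<Rightarrow> bool) \<Rightarrow> bool" where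
  "directed_index I le \<longleftrightarrow> I \<noteq> {} \<and> (\<forall>a\<in>I. le a a)
     \<and> (\<forall>a\<in>I. \<forall>b\<in>I. \<forall>c\<in>I. le a b \<and> le b c \<longrightarrow> le a c)
     \<and> (\<forall>a\<in>I. \<forall>b\<in>I. \<exists>c\<in>I. le a c \<and> le b c)"

definition decr_to_zero :: "'j set \<Rightarrow> ('j \<Rightarrow> 'j \<Rightarrow> bool) \<Rightarrow> ('j \<Rightarrow> 'a::{ordered_real_vector,lattice}) \<Rightarrow> bool" where
  "decr_to_zero I le u \<longleftrightarrow> (\<forall>a\<in>I. \<forall>b\<in>I. le a b \<longrightarrow> u b \<le> u a)
     \<and> (\<forall>a\<in>I. 0 \<le> u a) \<and> (\<forall>w. (\<forall>a\<in>I. w \<le> u a) \<longrightarrow> w \<le> 0)"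

definition net_to_zero :: "'a::real_vector topology \<Rightarrow> 'j set \<Rightarrow> ('j \<Rightarrow> 'j \<Rightarrow> bool) \<Rightarrow> ('j \<Rightarrow> 'a) \<Rightarrow> bool" where
  "net_to_zero T I le u \<longleftrightarrow>
     (\<forall>V. zero_nbhd T V \<longrightarrow> (\<exists>a0\<in>I. \<forall>a\<in>I. le a0 a \<longrightarrow> u a \<in> V))"

text \<open>Lebesgue property of (X,T), for nets indexed by (subsets of) the type 'j.\<close>
definition lebesgue_property :: "'a::{ordered_real_vector,lattice} topology \<Rightarrow> 'j itself \<Rightarrow> bool" where
  "lebesgue_property T J \<longleftrightarrow>
     (\<forall>(I::'j set) le u. directed_index I le \<and> decr_to_zero I le u \<longrightarrow> net_to_zero T I le u)"

text \<open>S_alpha decreases to 0 in the vector lattice O of orthomorphisms (infimum taken in O).\<close>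
definition orth_decr_to_zero :: "('a::{ordered_real_vector,lattice} \<Rightarrow> 'a) set \<Rightarrow> 'j set \<Rightarrow> ('j \<Rightarrow> 'j \<Rightarrow> bool)
    \<Rightarrow> ('j \<Rightarrow> 'a \<Rightarrow> 'a) \<Rightarrow> bool" where
  "orth_decr_to_zero Os I le S \<longleftrightarrow> (\<forall>a\<in>I. S a \<in> Os)
     \<and> (\<forall>a\<in>I. \<forall>b\<in>I. le a b \<longrightarrow> op_le (S b) (S a))
     \<and> (\<forall>a\<in>I. op_le (\<lambda>_. 0) (S a))
     \<and> (\<forall>R\<in>Os. (\<forall>a\<in>I. op_le R (S a)) \<longrightarrow> op_le R (\<lambda>_. 0))"

definition orth_b_to_zero :: "'a::{ordered_real_vector,lattice} topology \<Rightarrow> 'j set \<Rightarrow> ('j \<Rightarrow> 'j \<Rightarrow> bool)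
    \<Rightarrow> ('j \<Rightarrow> 'a \<Rightarrow> 'a) \<Rightarrow> bool" where
  "orth_b_to_zero T I le S \<longleftrightarrow> (\<forall>B V. tv_bounded T B \<and> zero_nbhd T V \<longrightarrow>
     (\<exists>a0\<in>I. \<forall>a\<in>I. le a0 a \<longrightarrow> S a ` B \<subseteq> V))"

definition orth_c_to_zero :: "'a::{ordered_real_vector,lattice} topology \<Rightarrow> 'j set \<Rightarrow> ('j \<Rightarrow> 'j \<Rightarrow> bool)
    \<Rightarrow> ('j \<Rightarrow> 'a \<Rightarrow> 'a) \<Rightarrow> bool" where
  "orth_c_to_zero T I le S \<longleftrightarrow> (\<forall>V. zero_nbhd T V \<longrightarrow> (\<exists>U. zero_nbhd T U \<and>
     (\<forall>\<epsilon>>0. \<exists>a0\<in>I. \<forall>a\<in>I. le a0 a \<longrightarrow> S a ` U \<subseteq> (\<lambda>x. \<epsilon> *\<^sub>R x) ` V)))"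

definition lebesgue_Orth_b :: "'a::{ordered_real_vector,lattice} topology \<Rightarrow> 'j itself \<Rightarrow> bool" where
  "lebesgue_Orth_b T J \<longleftrightarrow>
     (\<forall>(I::'j set) le S. directed_index I le \<and> orth_decr_to_zero (Orth_b T) I le S
        \<longrightarrow> orth_b_to_zero T I le S)"

definition lebesgue_Orth_c :: "'a::{ordered_real_vector,lattice} topology \<Rightarrow> 'j itself \<Rightarrow> bool" where
  "lebesgue_Orth_c T J \<longleftrightarrow>
     (\<forall>(I::'j set) le S. directed_index I le \<and> orth_decr_to_zero (Orth_c T) I le S
        \<longrightarrow> orth_c_to_zero T I le S)"

end

theory Submission
  imports Defs "HOL-Library.Lattice_Algebras"
begin

text \<open>Given a net u_a decreasing to 0, multiplication by v_a = inf (u_a) e is an orthomorphism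
with labs (v_a x) \<le> labs x, because 0 \<le> v_a \<le> e; so these operators lie in both Orth_b(X) and
Orth_c(X). Multiplication in an Archimedean f-algebra is order continuous, hence they decrease to 0
in Orth(X), and the Lebesgue property of Orth_b(X) or Orth_c(X) makes them converge to 0, in
particular at the point w = u_a0 + e. Since u_a \<le> v_a w for a \<ge> a0, local solidity transfers this
convergence to u_a.\<close>

text \<open>The sort of vector lattices satisfies the axioms of the class lattice_ab_group_add without
being an instance of it.\<close>

interpretation riesz: lattice_ab_group_add "(+)" "0::'a::{ordered_real_vector,lattice}"
    "(-)" uminus "(\<le>)" "(<)" inf sup
  by unfold_locales

lemma neg_part_eq_pos_part_diff: "sup (- d) 0 = sup d 0 - (d::'a::{ordered_real_vector,lattice})"
  using riesz.add_sup_distrib_left[of "- d" d 0] by (simp add: sup_commute)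

lemma pos_part_neg_part_disjoint:
  "inf (sup d 0) (sup (- d) 0) = (0::'a::{ordered_real_vector,lattice})"
proof -
  have "inf (sup d 0) (sup (- d) 0) = inf (sup d 0 + 0) (sup d 0 + - d)"
    by (simp add: neg_part_eq_pos_part_diff)
  also have "\<dots> = sup d 0 + inf 0 (- d)"
    by (rule riesz.add_inf_distrib_left[symmetric])
  also have "\<dots> = sup d 0 - sup 0 d"
    by (simp add: riesz.neg_sup_eq_inf[of 0 d, symmetric])
  finally show ?thesis by (simp add: sup_commute)
qed

lemma inf_add_pos_part: "inf b a + sup (a - b) 0 = (a::'a::{ordered_real_vector,lattice})"
proof -
  have "a - sup (a - b) 0 = inf b a"
    using riesz.diff_sup_eq_inf[of a "a - b" 0] riesz.add_inf_distrib_left[of a "b - a" 0] by simp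
  thus ?thesis by (metis diff_add_cancel)
qed

lemma inf_add_le_add_inf:
  fixes q z g :: "'a::{ordered_real_vector,lattice}"
  assumes "0 \<le> q" "0 \<le> z" "0 \<le> g"
  shows "inf q (z + g) \<le> inf q z + inf q g"
proof -
  have "inf q (z + g) \<le> inf q z + q"
    using assms by (meson add_increasing inf_le1 inf_greatest order_trans)
  moreover have "inf q (z + g) \<le> inf (q + g) (z + g)"
    using assms by (meson add_increasing2 inf_mono order_refl)
  moreover have "inf (q + g) (z + g) = inf q z + g"
    using riesz.add_inf_distrib_right[of q z g] by simp
  ultimately have "inf q (z + g) \<le> inf (inf q z + q) (inf q z + g)"
    by simp
  also have "\<dots> = inf q z + inf q g"
    using riesz.add_inf_distrib_left[of "inf q z" q g] by simp
  finally show ?thesis .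
qed

lemma inf_le_if_disjoint_pos_part:
  fixes p v w :: "'a::{ordered_real_vector,lattice}"
  assumes "0 \<le> p" "0 \<le> v" "0 \<le> w" and disjoint: "inf p (sup (w - v) 0) = 0"
  shows "inf p w \<le> v"
proof -
  have "w = inf v w + sup (w - v) 0" by (rule inf_add_pos_part[symmetric])
  hence "inf p w \<le> inf p (inf v w) + inf p (sup (w - v) 0)"
    using inf_add_le_add_inf[of p "inf v w" "sup (w - v) 0"] assms(1-3) by simp
  also have "\<dots> \<le> v" using disjoint by (simp add: le_infI2)
  finally show ?thesis .
qed

lemma labs_nonneg: "0 \<le> labs (x::'a::{ordered_real_vector,lattice})"
proof -
  have "x + - x \<le> labs x + labs x"
    by (intro add_mono) (simp_all add: labs_def)
  thus ?thesis by simp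
qed

lemma labs_of_nonneg: "0 \<le> (x::'a::{ordered_real_vector,lattice}) \<Longrightarrow> labs x = x"
  unfolding labs_def by (simp add: sup_absorb1 order_trans[of "- x" 0 x])

lemma labs_le_iff: "labs x \<le> k \<longleftrightarrow> x \<le> k \<and> - x \<le> (k::'a::{ordered_real_vector,lattice})"
  by (simp add: labs_def)

lemma f_algebra_bilinear: "f_algebra m \<Longrightarrow> bilinear m"
  by (simp add: f_algebra_def riesz_algebra_def)

lemma f_algebra_linear_mult: "f_algebra m \<Longrightarrow> linear (m x)"
  by (simp add: f_algebra_def riesz_algebra_def bilinear_def)

lemma f_algebra_mult_nonneg: "f_algebra m \<Longrightarrow> 0 \<le> x \<Longrightarrow> 0 \<le> y \<Longrightarrow> 0 \<le> m x y"
  by (simp add: f_algebra_def riesz_algebra_def)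

lemma f_algebra_mult_disjoint:
  "f_algebra m \<Longrightarrow> inf x y = 0 \<Longrightarrow> 0 \<le> z \<Longrightarrow> inf (m z x) y = 0 \<and> inf (m x z) y = 0"
  by (simp add: f_algebra_def)

lemma f_algebra_mult_left_mono:
  fixes m :: "'a::{ordered_real_vector,lattice} \<Rightarrow> 'a \<Rightarrow> 'a"
  assumes fa: "f_algebra m" and "a \<le> b" "0 \<le> x"
  shows "m a x \<le> m b x"
proof -
  have "0 \<le> m (b - a) x" using assms by (simp add: f_algebra_mult_nonneg)
  thus ?thesis using bilinear_lsub[OF f_algebra_bilinear[OF fa]] by simp
qed

lemma f_algebra_mult_right_mono:
  fixes m :: "'a::{ordered_real_vector,lattice} \<Rightarrow> 'a \<Rightarrow> 'a"
  assumes fa: "f_algebra m" and "x \<le> y" "0 \<le> v"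
  shows "m v x \<le> m v y"
proof -
  have "0 \<le> m v (y - x)" using assms by (simp add: f_algebra_mult_nonneg)
  thus ?thesis using bilinear_rsub[OF f_algebra_bilinear[OF fa]] by simp
qed

lemma f_algebra_square_nonneg:
  fixes m :: "'a::{ordered_real_vector,lattice} \<Rightarrow> 'a \<Rightarrow> 'a"
  assumes fa: "f_algebra m"
  shows "0 \<le> m x x"
proof -
  define p where "p = sup x 0"
  define n where "n = sup (- x) 0"
  have x: "x = p - n"
    using neg_part_eq_pos_part_diff[of x] by (simp add: p_def n_def)
  have pn: "inf p n = 0" and np: "inf n p = 0"
    using pos_part_neg_part_disjoint[of x] by (simp_all add: p_def n_def inf_commute)
  have p0: "0 \<le> p" and n0: "0 \<le> n" by (simp_all add: p_def n_def)
  have "inf p (m p n) = 0" "inf n (m n p) = 0"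
    using f_algebra_mult_disjoint[OF fa] pn np p0 n0 by (simp_all add: inf_commute)
  hence "inf (m p n) (m p n) = 0" "inf (m n p) (m n p) = 0"
    using f_algebra_mult_disjoint[OF fa] p0 n0 by blast+
  hence "m p n = 0" "m n p = 0" by simp_all
  moreover have "m x x = m p p - m p n - (m n p - m n n)"
    unfolding x using f_algebra_bilinear[OF fa] by (simp add: bilinear_lsub bilinear_rsub)
  ultimately show ?thesis using f_algebra_mult_nonneg[OF fa] p0 n0 by simp
qed

lemma f_algebra_unit_nonneg:
  fixes m :: "'a::{ordered_real_vector,lattice} \<Rightarrow> 'a \<Rightarrow> 'a"
  assumes "f_algebra m" "mult_unit m e"
  shows "0 \<le> e"
  using f_algebra_square_nonneg[OF assms(1), of e] assms(2) by (simp add: mult_unit_def)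

lemma f_algebra_labs_mult_le:
  fixes m :: "'a::{ordered_real_vector,lattice} \<Rightarrow> 'a \<Rightarrow> 'a"
  assumes fa: "f_algebra m" and un: "mult_unit m e" and "0 \<le> v" "v \<le> e"
  shows "labs (m v x) \<le> labs x"
proof -
  have "m v y \<le> labs x" if "y \<le> labs x" for y
  proof -
    have "m v y \<le> m v (labs x)" using f_algebra_mult_right_mono[OF fa that \<open>0 \<le> v\<close>] .
    also have "\<dots> \<le> m e (labs x)" using f_algebra_mult_left_mono[OF fa \<open>v \<le> e\<close> labs_nonneg] .
    finally show ?thesis using un by (simp add: mult_unit_def)
  qed
  moreover have "- m v x = m v (- x)" using bilinear_rneg[OF f_algebra_bilinear[OF fa]] by simp
  ultimately show ?thesis by (simp add: labs_le_iff labs_def)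
qed

lemma f_algebra_pos_part_disjoint:
  fixes m :: "'a::{ordered_real_vector,lattice} \<Rightarrow> 'a \<Rightarrow> 'a"
  assumes fa: "f_algebra m" and "0 \<le> x" "y \<le> m v x"
  shows "inf (sup (y - m w x) 0) (sup (w - v) 0) = 0"
proof -
  define r where "r = sup (v - w) 0"
  have "v \<le> r + w" unfolding r_def by (metis diff_le_eq sup_ge1)
  hence "m v x \<le> m r x + m w x"
    using f_algebra_mult_left_mono[OF fa _ \<open>0 \<le> x\<close>] bilinear_ladd[OF f_algebra_bilinear[OF fa]]
    by metis
  hence "sup (y - m w x) 0 \<le> m r x"
    using \<open>y \<le> m v x\<close> f_algebra_mult_nonneg[OF fa _ \<open>0 \<le> x\<close>, of r]
    by (simp add: r_def diff_le_eq)
  moreover have "inf (m r x) (sup (w - v) 0) = 0"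
    using pos_part_neg_part_disjoint[of "v - w"] f_algebra_mult_disjoint[OF fa _ \<open>0 \<le> x\<close>]
    by (simp add: r_def)
  ultimately have "inf (sup (y - m w x) 0) (sup (w - v) 0) \<le> 0" by (metis inf_mono order_refl)
  thus ?thesis by (intro antisym) simp_all
qed

lemma f_algebra_lower_bound_le_scaled:
  fixes m :: "'a::{ordered_real_vector,lattice} \<Rightarrow> 'a \<Rightarrow> 'a"
  assumes fa: "f_algebra m"
    and "u \<in> A" and A_nonneg: "\<forall>v\<in>A. 0 \<le> v" and A_inf: "\<forall>w. (\<forall>v\<in>A. w \<le> v) \<longrightarrow> w \<le> 0"
    and "0 \<le> x" "0 \<le> y" and y_le: "\<forall>v\<in>A. y \<le> m v x" and "0 < c" "c \<le> 1"
  shows "y \<le> c *\<^sub>R m u x"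
proof -
  \<comment> \<open>p is disjoint from every positive part of c u - v, so inf p (c u) is a lower bound of A.\<close>
  have b: "bilinear m" using f_algebra_bilinear[OF fa] .
  define p where "p = sup (y - m (c *\<^sub>R u) x) 0"
  have cu: "0 \<le> c *\<^sub>R u"
    using A_nonneg \<open>u \<in> A\<close> \<open>0 < c\<close> by (simp add: scaleR_nonneg_nonneg)
  have "inf p (c *\<^sub>R u) \<le> v" if "v \<in> A" for v
  proof (rule inf_le_if_disjoint_pos_part)
    show "0 \<le> p" by (simp add: p_def)
    show "0 \<le> v" using A_nonneg that by blast
    show "inf p (sup (c *\<^sub>R u - v) 0) = 0"
      unfolding p_def using f_algebra_pos_part_disjoint[OF fa \<open>0 \<le> x\<close>] y_le that by blast
  qed fact
  hence "inf (c *\<^sub>R u) p = 0"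
    using A_inf cu by (simp add: p_def inf_commute antisym)
  hence "inf (m (c *\<^sub>R u) x) p = 0" using f_algebra_mult_disjoint[OF fa _ \<open>0 \<le> x\<close>] by blast
  hence disjoint: "inf p (c *\<^sub>R m u x) = 0" using bilinear_lmul[OF b] by (simp add: inf_commute)
  have "y - m (c *\<^sub>R u) x \<le> y" using f_algebra_mult_nonneg[OF fa cu \<open>0 \<le> x\<close>] by simp
  moreover have "y \<le> m u x" using y_le \<open>u \<in> A\<close> by blast
  moreover have "0 \<le> m u x" using f_algebra_mult_nonneg[OF fa] A_nonneg \<open>u \<in> A\<close> \<open>0 \<le> x\<close> by blast
  ultimately have "p \<le> m u x" unfolding p_def by (meson order_trans sup_least)
  hence "c *\<^sub>R p \<le> inf p (c *\<^sub>R m u x)"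
    using \<open>c \<le> 1\<close> \<open>0 < c\<close> by (simp add: p_def scaleR_left_le_one_le scaleR_left_mono)
  hence "p \<le> 0" using disjoint \<open>0 < c\<close> by (simp add: scaleR_le_0_iff)
  thus ?thesis using bilinear_lmul[OF b] by (simp add: p_def)
qed

lemma f_algebra_mult_inf_zero:
  fixes m :: "'a::{ordered_real_vector,lattice} \<Rightarrow> 'a \<Rightarrow> 'a"
  assumes fa: "f_algebra m" and arch: "archimedean_vl (UNIV :: 'a set)"
    and "u \<in> A" and A_nonneg: "\<forall>v\<in>A. 0 \<le> v" and A_inf: "\<forall>w. (\<forall>v\<in>A. w \<le> v) \<longrightarrow> w \<le> 0"
    and "0 \<le> x" "0 \<le> y" and y_le: "\<forall>v\<in>A. y \<le> m v x"
  shows "y = 0"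
proof -
  have "real n *\<^sub>R y \<le> m u x" for n :: nat
  proof (cases "n = 0")
    case True
    thus ?thesis using f_algebra_mult_nonneg[OF fa] A_nonneg \<open>u \<in> A\<close> \<open>0 \<le> x\<close> by simp
  next
    case False
    hence "y \<le> (1 / real n) *\<^sub>R m u x"
      using f_algebra_lower_bound_le_scaled[OF fa \<open>u \<in> A\<close> A_nonneg A_inf \<open>0 \<le> x\<close> \<open>0 \<le> y\<close> y_le]
      by simp
    hence "real n *\<^sub>R y \<le> real n *\<^sub>R ((1 / real n) *\<^sub>R m u x)"
      by (intro scaleR_left_mono) simp_all
    also have "\<dots> = m u x" using False by simp
    finally show ?thesis .
  qed
  thus ?thesis using arch \<open>0 \<le> y\<close> unfolding archimedean_vl_def by blast
qed

lemma f_algebra_le_mult_inf_unit: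
  fixes m :: "'a::{ordered_real_vector,lattice} \<Rightarrow> 'a \<Rightarrow> 'a"
  assumes fa: "f_algebra m" and un: "mult_unit m e" and "0 \<le> u" "u \<le> w"
  shows "u \<le> m (inf u e) (w + e)"
proof -
  \<comment> \<open>m (inf u e) (w + e) = w - m s w + inf u e, and the disjoint elements r and m s w are both below w.\<close>
  have b: "bilinear m" using f_algebra_bilinear[OF fa] .
  have e: "m e x = x" for x using un by (simp add: mult_unit_def)
  have "0 \<le> e" using f_algebra_unit_nonneg[OF fa un] .
  have "0 \<le> w" using assms(3,4) by simp
  define r where "r = sup (u - e) 0"
  define s where "s = sup (e - u) 0"
  have "inf u e + s = e" unfolding s_def by (rule inf_add_pos_part)
  hence "inf u e = e - s" by (simp add: eq_diff_eq)
  hence mult_eq: "m (inf u e) (w + e) = w - m s w + inf u e"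
    using bilinear_radd[OF b] bilinear_lsub[OF b] un by (simp add: mult_unit_def)
  have "inf s r = 0" using pos_part_neg_part_disjoint[of "u - e"] by (simp add: r_def s_def inf_commute)
  hence "inf r (m s w) = 0"
    using f_algebra_mult_disjoint[OF fa _ \<open>0 \<le> w\<close>] by (simp add: inf_commute)
  hence "r + m s w = sup r (m s w)" using riesz.add_eq_inf_sup[of r "m s w"] by simp
  moreover have "r \<le> w" using assms(4) \<open>0 \<le> e\<close> \<open>0 \<le> w\<close> by (simp add: r_def diff_le_eq add_increasing2)
  moreover have "m s w \<le> w"
    using f_algebra_mult_left_mono[OF fa _ \<open>0 \<le> w\<close>, of s e] \<open>0 \<le> e\<close> assms(3) e
    by (simp add: s_def)
  ultimately have "r \<le> w - m s w" by (simp add: le_diff_eq)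
  have "u = inf u e + r" unfolding r_def inf_commute[of u e] by (rule inf_add_pos_part[symmetric])
  also have "\<dots> \<le> inf u e + (w - m s w)" using \<open>r \<le> w - m s w\<close> by (rule add_left_mono)
  also have "\<dots> = m (inf u e) (w + e)" using mult_eq by (simp add: add.commute)
  finally show ?thesis .
qed

lemma orthomorphism_if_labs_le:
  fixes P :: "'a::{ordered_real_vector,lattice} \<Rightarrow> 'a"
  assumes "linear P" and P_le: "\<forall>x. labs (P x) \<le> labs x"
  shows "orthomorphism P"
  unfolding orthomorphism_def
proof (intro conjI allI impI)
  show "order_bounded_op P" unfolding order_bounded_op_def
  proof (intro allI)
    fix a b :: 'a
    define k where "k = labs a + labs b"
    have "labs (P x) \<le> k" if "a \<le> x" "x \<le> b" for x
    proof -
      have "x \<le> k" using that labs_nonneg[of a]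
        unfolding k_def labs_def by (meson add_increasing order_trans sup.cobounded1)
      moreover have "- x \<le> k" using that labs_nonneg[of b]
        unfolding k_def labs_def by (meson add_increasing2 neg_le_iff_le order_trans sup.cobounded2)
      ultimately show ?thesis using P_le order_trans by (metis labs_le_iff)
    qed
    hence "P ` {a..b} \<subseteq> {- k..k}" by (force simp: labs_le_iff minus_le_iff)
    thus "\<exists>c d. P ` {a..b} \<subseteq> {c..d}" by blast
  qed
  fix x y :: 'a
  assume "disj x y"
  moreover have "inf (labs (P x)) (labs y) \<le> inf (labs x) (labs y)"
    using P_le by (simp add: le_infI1)
  ultimately show "disj (P x) y"
    by (simp add: disj_def antisym labs_nonneg)
qed (fact \<open>linear P\<close>)

lemma linear_topology_openin_translate:
  fixes T :: "'a::real_vector topology"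
  assumes lt: "linear_topology T" and "openin T G"
  shows "openin T {z. c + z \<in> G}"
proof -
  have top: "topspace T = UNIV" using lt by (simp add: linear_topology_def)
  have "continuous_map T (prod_topology T T) (\<lambda>z. (c, z))"
    by (rule continuous_map_pairedI) (simp_all add: top)
  hence "continuous_map T T ((\<lambda>(x, y). x + y) \<circ> (\<lambda>z. (c, z)))"
    using lt continuous_map_compose unfolding linear_topology_def by blast
  hence "continuous_map T T (\<lambda>z. c + z)" by (simp add: o_def)
  from openin_continuous_map_preimage[OF this \<open>openin T G\<close>] show ?thesis by (simp add: top)
qed

lemma linear_topology_small_scalars:
  fixes T :: "'a::real_vector topology"
  assumes lt: "linear_topology T" and "zero_nbhd T V"
  shows "\<exists>\<delta>>0. \<forall>t. \<bar>t\<bar> < \<delta> \<longrightarrow> t *\<^sub>R z \<in> V"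
proof -
  have top: "topspace T = UNIV" using lt by (simp add: linear_topology_def)
  obtain W where W: "openin T W" "0 \<in> W" "W \<subseteq> V" using assms(2) by (auto simp: zero_nbhd_def)
  have "continuous_map euclideanreal (prod_topology euclideanreal T) (\<lambda>t. (t, z))"
    by (rule continuous_map_pairedI) (simp_all add: top)
  hence "continuous_map euclideanreal T ((\<lambda>(c, x). c *\<^sub>R x) \<circ> (\<lambda>t. (t, z)))"
    using lt continuous_map_compose unfolding linear_topology_def by blast
  hence "continuous_map euclideanreal T (\<lambda>t. t *\<^sub>R z)" by (simp add: o_def)
  from openin_continuous_map_preimage[OF this W(1)]
  have "openin euclidean {t::real. t *\<^sub>R z \<in> W}" by simp
  hence "open {t::real. t *\<^sub>R z \<in> W}" by (simp only: open_openin)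
  moreover have "(0::real) \<in> {t. t *\<^sub>R z \<in> W}" using W(2) by simp
  ultimately obtain \<delta> where "\<delta> > 0" and \<delta>: "ball 0 \<delta> \<subseteq> {t::real. t *\<^sub>R z \<in> W}"
    by (rule openE)
  have "t *\<^sub>R z \<in> V" if "\<bar>t\<bar> < \<delta>" for t
    using that \<delta> W(3) by (force simp: dist_real_def)
  thus ?thesis using \<open>\<delta> > 0\<close> by blast
qed

lemma linear_topology_absorbing:
  fixes T :: "'a::real_vector topology"
  assumes "linear_topology T" "zero_nbhd T V"
  shows "\<exists>s>0. \<forall>t>s. z \<in> (\<lambda>x. t *\<^sub>R x) ` V"
proof -
  obtain \<delta> where "\<delta> > 0" and \<delta>: "\<forall>t. \<bar>t\<bar> < \<delta> \<longrightarrow> t *\<^sub>R z \<in> V"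
    using linear_topology_small_scalars[OF assms] by blast
  have "z \<in> (\<lambda>x. t *\<^sub>R x) ` V" if "t > 1 / \<delta>" for t
  proof -
    have "t > 0" using that \<open>\<delta> > 0\<close> less_trans[of 0 "1 / \<delta>" t] by simp
    hence "\<bar>1 / t\<bar> < \<delta>" using that \<open>\<delta> > 0\<close> by (simp add: field_simps)
    hence "(1 / t) *\<^sub>R z \<in> V" using \<delta> by blast
    moreover have "z = t *\<^sub>R ((1 / t) *\<^sub>R z)" using \<open>t > 0\<close> by simp
    ultimately show ?thesis by blast
  qed
  thus ?thesis using \<open>\<delta> > 0\<close> by (intro exI[of _ "1 / \<delta>"]) simp
qed

lemma linear_topology_bounded_singleton:
  "linear_topology T \<Longrightarrow> tv_bounded T {z}"
  unfolding tv_bounded_def using linear_topology_absorbing by fastforce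

lemma locally_solid_obtain_solid_nbhd:
  assumes "locally_solid T" "zero_nbhd T V"
  obtains W where "zero_nbhd T W" "solid W" "W \<subseteq> V"
  using assms by (auto simp: locally_solid_def)

lemma continuous_map_if_labs_le:
  fixes T :: "'a::{ordered_real_vector,lattice} topology"
  assumes ls: "locally_solid T" and "linear P" and P_le: "\<forall>x. labs (P x) \<le> labs x"
  shows "continuous_map T T P"
proof -
  have lt: "linear_topology T" using ls by (simp add: locally_solid_def)
  have top: "topspace T = UNIV" using lt by (simp add: linear_topology_def)
  have "openin T {x. P x \<in> G}" if G: "openin T G" for G
  proof (subst openin_subopen, intro ballI)
    fix x assume "x \<in> {x. P x \<in> G}"
    hence "zero_nbhd T {z. P x + z \<in> G}"
      using linear_topology_openin_translate[OF lt G] unfolding zero_nbhd_def by force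
    then obtain W where W: "zero_nbhd T W" "solid W" "W \<subseteq> {z. P x + z \<in> G}"
      using locally_solid_obtain_solid_nbhd[OF ls] by blast
    obtain W0 where W0: "openin T W0" "0 \<in> W0" "W0 \<subseteq> W" using W(1) by (auto simp: zero_nbhd_def)
    have "P z \<in> G" if "- x + z \<in> W0" for z
    proof -
      have "P (z - x) \<in> W" using that W0(3) W(2) P_le unfolding solid_def by auto
      thus ?thesis using W(3) linear_diff[OF \<open>linear P\<close>] by auto
    qed
    moreover have "openin T {z. - x + z \<in> W0}" by (rule linear_topology_openin_translate[OF lt W0(1)])
    ultimately show "\<exists>N. openin T N \<and> x \<in> N \<and> N \<subseteq> {x. P x \<in> G}"
      using W0(2) by (intro exI[of _ "{z. - x + z \<in> W0}"]) auto
  qed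
  thus ?thesis by (simp add: continuous_map_def top)
qed

lemma tv_bounded_image_if_labs_le:
  fixes T :: "'a::{ordered_real_vector,lattice} topology"
  assumes ls: "locally_solid T" and "linear P" and P_le: "\<forall>x. labs (P x) \<le> labs x"
    and "tv_bounded T B"
  shows "tv_bounded T (P ` B)"
  unfolding tv_bounded_def
proof (intro allI impI)
  fix V assume "zero_nbhd T V"
  then obtain W where W: "zero_nbhd T W" "solid W" "W \<subseteq> V"
    using locally_solid_obtain_solid_nbhd[OF ls] by blast
  then obtain s where "s > 0" and s: "\<forall>t>s. B \<subseteq> (\<lambda>x. t *\<^sub>R x) ` W"
    using \<open>tv_bounded T B\<close> unfolding tv_bounded_def by blast
  have "P ` B \<subseteq> (\<lambda>x. t *\<^sub>R x) ` V" if t: "t > s" for t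
  proof
    fix y assume "y \<in> P ` B"
    then obtain w where "w \<in> W" "y = P (t *\<^sub>R w)" using s t by blast
    moreover have "P w \<in> W" using \<open>w \<in> W\<close> W(2) P_le unfolding solid_def by blast
    ultimately show "y \<in> (\<lambda>x. t *\<^sub>R x) ` V" using W(3) linear_scale[OF \<open>linear P\<close>] by auto
  qed
  thus "\<exists>s>0. \<forall>t>s. P ` B \<subseteq> (\<lambda>x. t *\<^sub>R x) ` V" using \<open>s > 0\<close> by blast
qed

lemma labs_le_in_Orth_b_Orth_c:
  fixes T :: "'a::{ordered_real_vector,lattice} topology"
  assumes "locally_solid T" "linear P" "\<forall>x. labs (P x) \<le> labs x"
  shows "P \<in> Orth_b T" "P \<in> Orth_c T"
  using assms orthomorphism_if_labs_le tv_bounded_image_if_labs_le continuous_map_if_labs_le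
  by (auto simp: Orth_b_def Orth_c_def)

lemma decr_to_zero_inf:
  fixes u :: "'j \<Rightarrow> 'a::{ordered_real_vector,lattice}"
  assumes "0 \<le> e" "decr_to_zero I le u"
  shows "decr_to_zero I le (\<lambda>a. inf (u a) e)"
  using assms unfolding decr_to_zero_def by (auto intro: le_infI1)

lemma orth_decr_to_zero_mult:
  fixes m :: "'a::{ordered_real_vector,lattice} \<Rightarrow> 'a \<Rightarrow> 'a"
  assumes fa: "f_algebra m" and arch: "archimedean_vl (UNIV :: 'a set)"
    and "I \<noteq> {}" and v: "decr_to_zero I le v" and "\<forall>a\<in>I. m (v a) \<in> Os"
  shows "orth_decr_to_zero Os I le (\<lambda>a. m (v a))"
  unfolding orth_decr_to_zero_def
proof (intro conjI ballI impI)
  have v_dec: "\<forall>a\<in>I. \<forall>b\<in>I. le a b \<longrightarrow> v b \<le> v a" and v_nonneg: "\<forall>a\<in>I. 0 \<le> v a"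
    and v_inf: "\<forall>w. (\<forall>a\<in>I. w \<le> v a) \<longrightarrow> w \<le> 0"
    using v by (simp_all add: decr_to_zero_def)
  show "m (v a) \<in> Os" if "a \<in> I" for a using assms(5) that by blast
  show "op_le (m (v b)) (m (v a))" if "a \<in> I" "b \<in> I" "le a b" for a b
    using that v_dec f_algebra_mult_left_mono[OF fa] by (simp add: op_le_def)
  show "op_le (\<lambda>_. 0) (m (v a))" if "a \<in> I" for a
    using that v_nonneg f_algebra_mult_nonneg[OF fa] by (simp add: op_le_def)
  fix R assume R: "\<forall>a\<in>I. op_le R (m (v a))"
  show "op_le R (\<lambda>_. 0)" unfolding op_le_def
  proof (intro allI impI)
    fix x :: 'a assume "0 \<le> x"
    obtain a0 where "a0 \<in> I" using \<open>I \<noteq> {}\<close> by blast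
    have "\<forall>w\<in>v ` I. sup (R x) 0 \<le> m w x"
      using R \<open>0 \<le> x\<close> v_nonneg f_algebra_mult_nonneg[OF fa] by (auto simp: op_le_def)
    hence "sup (R x) 0 = 0"
      using f_algebra_mult_inf_zero[OF fa arch, of "v a0" "v ` I"] \<open>a0 \<in> I\<close> v_nonneg v_inf \<open>0 \<le> x\<close>
      by auto
    thus "R x \<le> 0" by (metis sup.cobounded1)
  qed
qed

lemma orth_b_to_zero_pointwise:
  assumes "linear_topology T" "orth_b_to_zero T I le S"
  shows "net_to_zero T I le (\<lambda>a. S a w)"
  using assms linear_topology_bounded_singleton[of T w]
  unfolding orth_b_to_zero_def net_to_zero_def by blast

lemma orth_c_to_zero_pointwise:
  assumes lt: "linear_topology T" and lin: "\<forall>a\<in>I. linear (S a)" and "orth_c_to_zero T I le S"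
  shows "net_to_zero T I le (\<lambda>a. S a w)"
  unfolding net_to_zero_def
proof (intro allI impI)
  fix V assume "zero_nbhd T V"
  then obtain U where "zero_nbhd T U"
    and U: "\<forall>\<epsilon>>0. \<exists>a0\<in>I. \<forall>a\<in>I. le a0 a \<longrightarrow> S a ` U \<subseteq> (\<lambda>x. \<epsilon> *\<^sub>R x) ` V"
    using \<open>orth_c_to_zero T I le S\<close> unfolding orth_c_to_zero_def by blast
  obtain c where "c > 0" "w \<in> (\<lambda>x. c *\<^sub>R x) ` U"
    using linear_topology_absorbing[OF lt \<open>zero_nbhd T U\<close>, of w] by (meson gt_ex less_trans)
  then obtain y where "y \<in> U" "w = c *\<^sub>R y" by blast
  obtain a0 where "a0 \<in> I" and a0: "\<forall>a\<in>I. le a0 a \<longrightarrow> S a ` U \<subseteq> (\<lambda>x. (1 / c) *\<^sub>R x) ` V"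
    using U \<open>c > 0\<close> by (meson divide_pos_pos zero_less_one)
  have "S a w \<in> V" if a: "a \<in> I" "le a0 a" for a
  proof -
    obtain z where "z \<in> V" "S a y = (1 / c) *\<^sub>R z" using a0 a \<open>y \<in> U\<close> by blast
    moreover have "S a w = c *\<^sub>R S a y"
      using \<open>w = c *\<^sub>R y\<close> linear_scale lin a(1) by blast
    ultimately show ?thesis using \<open>c > 0\<close> by simp
  qed
  thus "\<exists>a0\<in>I. \<forall>a\<in>I. le a0 a \<longrightarrow> S a w \<in> V" using \<open>a0 \<in> I\<close> by blast
qed

lemma net_to_zero_dominated:
  fixes T :: "'a::{ordered_real_vector,lattice} topology"
  assumes ls: "locally_solid T" and dir: "directed_index I le" and "a0 \<in> I"
    and dom: "\<forall>a\<in>I. le a0 a \<longrightarrow> labs (u a) \<le> labs (z a)" and z: "net_to_zero T I le z"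
  shows "net_to_zero T I le u"
  unfolding net_to_zero_def
proof (intro allI impI)
  fix V assume "zero_nbhd T V"
  then obtain W where W: "zero_nbhd T W" "solid W" "W \<subseteq> V"
    using locally_solid_obtain_solid_nbhd[OF ls] by blast
  then obtain a1 where "a1 \<in> I" and a1: "\<forall>a\<in>I. le a1 a \<longrightarrow> z a \<in> W"
    using z unfolding net_to_zero_def by blast
  obtain a2 where "a2 \<in> I" "le a0 a2" "le a1 a2"
    using dir \<open>a0 \<in> I\<close> \<open>a1 \<in> I\<close> unfolding directed_index_def by blast
  have "u a \<in> V" if "a \<in> I" "le a2 a" for a
  proof -
    have "le a0 a" "le a1 a"
      using dir that \<open>a0 \<in> I\<close> \<open>a1 \<in> I\<close> \<open>a2 \<in> I\<close> \<open>le a0 a2\<close> \<open>le a1 a2\<close>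
      unfolding directed_index_def by blast+
    thus ?thesis using dom a1 that(1) W unfolding solid_def by blast
  qed
  thus "\<exists>a0\<in>I. \<forall>a\<in>I. le a0 a \<longrightarrow> u a \<in> V" using \<open>a2 \<in> I\<close> by blast
qed

lemma mult_net_to_zero_pointwise:
  fixes T :: "'a::{ordered_real_vector,lattice} topology" and J :: "'j itself"
  assumes arch: "archimedean_vl (UNIV :: 'a set)" and fa: "f_algebra m"
    and ls: "locally_solid T" and un: "mult_unit m e"
    and Orth: "lebesgue_Orth_b T J \<or> lebesgue_Orth_c T J"
    and dir: "directed_index (I :: 'j set) le" and v: "decr_to_zero I le v" and v_le: "\<forall>a\<in>I. v a \<le> e"
  shows "net_to_zero T I le (\<lambda>a. m (v a) w)"
proof -
  have "I \<noteq> {}" using dir unfolding directed_index_def by blast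
  have "m (v a) \<in> Orth_b T" "m (v a) \<in> Orth_c T" if "a \<in> I" for a
    using labs_le_in_Orth_b_Orth_c[OF ls f_algebra_linear_mult[OF fa]]
      f_algebra_labs_mult_le[OF fa un] v v_le that unfolding decr_to_zero_def by blast+
  hence odz_b: "orth_decr_to_zero (Orth_b T) I le (\<lambda>a. m (v a))"
    and odz_c: "orth_decr_to_zero (Orth_c T) I le (\<lambda>a. m (v a))"
    using orth_decr_to_zero_mult[OF fa arch \<open>I \<noteq> {}\<close> v] by blast+
  have lt: "linear_topology T" using ls by (simp add: locally_solid_def)
  from Orth show ?thesis
  proof
    assume "lebesgue_Orth_b T J"
    hence "orth_b_to_zero T I le (\<lambda>a. m (v a))"
      using dir odz_b unfolding lebesgue_Orth_b_def by blast
    thus ?thesis by (rule orth_b_to_zero_pointwise[OF lt])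
  next
    assume "lebesgue_Orth_c T J"
    hence "orth_c_to_zero T I le (\<lambda>a. m (v a))"
      using dir odz_c unfolding lebesgue_Orth_c_def by blast
    with f_algebra_linear_mult[OF fa] show ?thesis by (intro orth_c_to_zero_pointwise[OF lt]) auto
  qed
qed

theorem mainTheorem11:
  fixes T :: "'a::{ordered_real_vector,lattice} topology"
    and m :: "'a \<Rightarrow> 'a \<Rightarrow> 'a" and e :: 'a and J :: "'j itself"
  assumes "archimedean_vl (UNIV :: 'a set)"
    and "f_algebra m"
    and "locally_solid T"
    and "mult_unit m e"
    and "lebesgue_Orth_b T J \<or> lebesgue_Orth_c T J"
  shows "lebesgue_property T J"
  unfolding lebesgue_property_def
proof (intro allI impI, elim conjE)
  fix I :: "'j set" and le and u :: "'j \<Rightarrow> 'a"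
  assume dir: "directed_index I le" and u: "decr_to_zero I le u"
  obtain a0 where "a0 \<in> I" using dir unfolding directed_index_def by blast
  have "0 \<le> e" using f_algebra_unit_nonneg[OF assms(2,4)] .
  define v where "v = (\<lambda>a. inf (u a) e)"
  have "net_to_zero T I le (\<lambda>a. m (v a) (u a0 + e))"
    using mult_net_to_zero_pointwise[OF assms dir] decr_to_zero_inf[OF \<open>0 \<le> e\<close> u]
    unfolding v_def by simp
  moreover have "labs (u a) \<le> labs (m (v a) (u a0 + e))" if "a \<in> I" "le a0 a" for a
  proof -
    have "0 \<le> u a" "u a \<le> u a0" using u that \<open>a0 \<in> I\<close> unfolding decr_to_zero_def by blast+
    hence "labs (u a) \<le> m (v a) (u a0 + e)"
      using f_algebra_le_mult_inf_unit[OF assms(2,4)] by (simp add: v_def labs_of_nonneg)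
    also have "\<dots> \<le> labs (m (v a) (u a0 + e))" by (simp add: labs_def)
    finally show ?thesis .
  qed
  ultimately show "net_to_zero T I le u"
    using net_to_zero_dominated[OF assms(3) dir \<open>a0 \<in> I\<close>, of u "\<lambda>a. m (v a) (u a0 + e)"] by blast
qed

end
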